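(* Let $R$ be a set and $\mathcal{G}:(\mathbf{1},R)\rightarrow(Y,R)$ an object of $\mathrm{2Open}_R$. Then the $\omega$-iteration $\mathcal{G}_\omega$ of $\mathcal{G}$ is an $F_\mathcal{G}$-coalgebra with coalgebra map $\alpha=(\langle\mathrm{now},\mathrm{ltr}\rangle,\langle\mathrm{hd},\mathrm{tl}\rangle):\mathcal{G}_\omega\rightarrow F_\mathcal{G}\mathcal{G}_\omega$, i.e. this pair of functions is a morphism in $\mathrm{2Open}_R$.
   Context: Fix a set $R$. Objects of $\mathrm{2Open}_R$ are open games $\mathcal{H}:(\mathbf{1},R)\rightarrow(Y_\mathcal{H},R)$ given by a strategy set $\Sigma_\mathcal{H}$, a move set $Y_\mathcal{H}$, a play function $P_\mathcal{H}:\Sigma_\mathcal{H}\rightarrow Y_\mathcal{H}$, an equilibrium function $E_\mathcal{H}:(Y_\mathcal{H}\rightarrow R)\rightarrow\mathcal{P}\Sigma_\mathcal{H}$, and identity coutility $C\,\sigma\,r=r$. A morphism $\beta:\mathcal{H}\rightarrow\mathcal{H}'$ is a pair $\beta_Y:Y_\mathcal{H}\rightarrow Y_{\mathcal{H}'}$, $\beta_\Sigma:\Sigma_\mathcal{H}\rightarrow\Sigma_{\mathcal{H}'}$ with $\beta_Y(P_\mathcal{H}\sigma)=P_{\mathcal{H}'}(\beta_\Sigma\sigma)$ for all $\sigma$, and such that for all $\sigma\in\Sigma_\mathcal{H}$ and $k:Y_{\mathcal{H}'}\rightarrow R$, $\sigma\in E_\mathcal{H}(k\circ\beta_Y)$ implies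 $\beta_\Sigma(\sigma)\in E_{\mathcal{H}'}(k)$. For the fixed $\mathcal{G}$ (data $\Sigma_\mathcal{G},Y,P_\mathcal{G},E_\mathcal{G}$) and any object $\mathcal{H}$, $F_\mathcal{G}\mathcal{H}$ is the game with strategies $\Sigma_\mathcal{G}\times(Y\rightarrow\Sigma_\mathcal{H})$, moves $Y\times Y_\mathcal{H}$, play $P(\sigma,f)=(P_\mathcal{G}\sigma,P_\mathcal{H}(f(P_\mathcal{G}\sigma)))$, identity coutility, and $(\sigma,f)\in E_{F_\mathcal{G}\mathcal{H}}(k)$ iff $\sigma\in E_\mathcal{G}(\lambda y.\,k(y,P_\mathcal{H}(f\,y)))$ and $f(y')\in E_\mathcal{H}(\lambda z.\,k(y',z))$ for all $y'\in Y$. An $F_\mathcal{G}$-coalgebra is an object $\mathcal{H}$ with a morphism $\mathcal{H}\rightarrow F_\mathcal{G}\mathcal{H}$. Notation: $Y^*$ is the set of finite words over $Y$, $\epsilon$ the empty word, $Y^\omega$ the set of infinite streams over $Y$, $y\mathrel{::}w$ prepending $y$ to a word or stream; $\mathrm{hd}(y_0y_1\dots)=y_0$, $\mathrm{tl}(y_0y_1y_2\dots)=y_1y_2\dots$. For $\sigma:Y^*\rightarrow\Sigma_\mathcal{G}$, $\sigma_0=\mathrm{now}(\sigma)=\sigma(\epsilon)$ and $\sigma'=\mathrm{ltr}(\sigma)=\lambda y.\lambda w.\,\sigma(yw):Y\rightarrow(Y^*\rightarrow\Sigma_\mathcal{G})$. The $\omega$-iteration $\mathcal{G}_\omega:(\mathbf{1},R)\rightarrow(Y^\omega,R)$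 has strategies $\Sigma_\omega=Y^*\rightarrow\Sigma_\mathcal{G}$, moves $Y^\omega$, identity coutility, play function $P_\omega$ the unique function with $P_\omega\sigma=P_\mathcal{G}\sigma_0\mathrel{::}P_\omega(\lambda z.\,\sigma(P_\mathcal{G}\sigma_0\mathrel{::}z))$, and equilibrium function $E_\omega$ the greatest fixed point of the monotone operator $\Phi$ on $(\mathcal{P}\Sigma_\omega)^{(Y^\omega\rightarrow R)}$ (ordered pointwise by inclusion) defined by: $\sigma\in\Phi(\Gamma)(k)$ iff $\sigma_0\in E_\mathcal{G}(\lambda y.\,k(y\mathrel{::}P_\omega(\sigma'y)))$ and for all $y'\in Y$, $\sigma'y'\in\Gamma(\lambda z.\,k(y'\mathrel{::}z))$. *)

theory Defs
  imports Main "HOL-Library.Stream"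
begin

(* An object H of 2Open_R is given by its play function P :: 'sH => 'yH and equilibrium
   function E :: ('yH => 'r) => 'sH set (strategy set = type 'sH, move set = type 'yH,
   coutility is the identity and therefore not represented). *)

definition is_morphism ::
  "('s1 \<Rightarrow> 'y1) \<Rightarrow> (('y1 \<Rightarrow> 'r) \<Rightarrow> 's1 set) \<Rightarrow>
   ('s2 \<Rightarrow> 'y2) \<Rightarrow> (('y2 \<Rightarrow> 'r) \<Rightarrow> 's2 set) \<Rightarrow>
   ('y1 \<Rightarrow> 'y2) \<Rightarrow> ('s1 \<Rightarrow> 's2) \<Rightarrow> bool" where
  "is_morphism P E P' E' bY bS \<longleftrightarrow>
     (\<forall>\<sigma>. bY (P \<sigma>) = P' (bS \<sigma>)) \<and>
     (\<forall>\<sigma> k. \<sigma> \<in> E (k \<circ> bY) \<longrightarrow> bS \<sigma> \<in> E' k)"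

definition FG_play ::
  "('s \<Rightarrow> 'y) \<Rightarrow> ('sH \<Rightarrow> 'yH) \<Rightarrow> 's \<times> ('y \<Rightarrow> 'sH) \<Rightarrow> 'y \<times> 'yH" where
  "FG_play PG PH = (\<lambda>(\<sigma>, f). (PG \<sigma>, PH (f (PG \<sigma>))))"

definition FG_eq ::
  "(('y \<Rightarrow> 'r) \<Rightarrow> 's set) \<Rightarrow> ('sH \<Rightarrow> 'yH) \<Rightarrow> (('yH \<Rightarrow> 'r) \<Rightarrow> 'sH set) \<Rightarrow>
   ('y \<times> 'yH \<Rightarrow> 'r) \<Rightarrow> ('s \<times> ('y \<Rightarrow> 'sH)) set" where
  "FG_eq EG PH EH k = {(\<sigma>, f). \<sigma> \<in> EG (\<lambda>y. k (y, PH (f y))) \<and>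
                                (\<forall>y'. f y' \<in> EH (\<lambda>z. k (y', z)))}"

definition now :: "('y list \<Rightarrow> 's) \<Rightarrow> 's" where
  "now \<sigma> = \<sigma> []"

definition ltr :: "('y list \<Rightarrow> 's) \<Rightarrow> 'y \<Rightarrow> ('y list \<Rightarrow> 's)" where
  "ltr \<sigma> = (\<lambda>y. \<lambda>w. \<sigma> (y # w))"

primcorec play_omega :: "('s \<Rightarrow> 'y) \<Rightarrow> ('y list \<Rightarrow> 's) \<Rightarrow> 'y stream" where
  "play_omega PG \<sigma> = PG (\<sigma> []) ## play_omega PG (\<lambda>z. \<sigma> (PG (\<sigma> []) # z))"

definition Phi_omega ::
  "('s \<Rightarrow> 'y) \<Rightarrow> (('y \<Rightarrow> 'r) \<Rightarrow> 's set) \<Rightarrow>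
   (('y stream \<Rightarrow> 'r) \<Rightarrow> ('y list \<Rightarrow> 's) set) \<Rightarrow>
   (('y stream \<Rightarrow> 'r) \<Rightarrow> ('y list \<Rightarrow> 's) set)" where
  "Phi_omega PG EG \<Gamma> = (\<lambda>k. {\<sigma>. now \<sigma> \<in> EG (\<lambda>y. k (y ## play_omega PG (ltr \<sigma> y))) \<and>
                                (\<forall>y'. ltr \<sigma> y' \<in> \<Gamma> (\<lambda>z. k (y' ## z)))})"

definition eq_omega ::
  "('s \<Rightarrow> 'y) \<Rightarrow> (('y \<Rightarrow> 'r) \<Rightarrow> 's set) \<Rightarrow> ('y stream \<Rightarrow> 'r) \<Rightarrow> ('y list \<Rightarrow> 's) set" where
  "eq_omega PG EG = gfp (Phi_omega PG EG)"

end

theory Submission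
  imports Defs
begin

(* The play equation of G_omega is literally <hd,tl> of the play, and E_omega, being a fixed
   point of Phi, unfolds in one step to exactly the equilibrium condition of F_G G_omega. *)

lemma mono_Phi_omega: "mono (Phi_omega PG EG)"
  unfolding mono_def Phi_omega_def le_fun_def by blast

lemma eq_omega_unfold: "eq_omega PG EG = Phi_omega PG EG (eq_omega PG EG)"
  unfolding eq_omega_def by (rule gfp_unfold[OF mono_Phi_omega])

lemma play_omega_now_ltr:
  "play_omega PG \<sigma> = PG (now \<sigma>) ## play_omega PG (ltr \<sigma> (PG (now \<sigma>)))"
  by (subst play_omega.code) (simp add: now_def ltr_def)

theorem proposition10:
  fixes PG :: "'s \<Rightarrow> 'y" and EG :: "('y \<Rightarrow> 'r) \<Rightarrow> 's set"
  shows "is_morphism (play_omega PG) (eq_omega PG EG)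
           (FG_play PG (play_omega PG)) (FG_eq EG (play_omega PG) (eq_omega PG EG))
           (\<lambda>s. (shd s, stl s)) (\<lambda>\<sigma>. (now \<sigma>, ltr \<sigma>))"
  unfolding is_morphism_def
proof (intro conjI allI impI)
  fix \<sigma> :: "'y list \<Rightarrow> 's"
  show "(shd (play_omega PG \<sigma>), stl (play_omega PG \<sigma>))
          = FG_play PG (play_omega PG) (now \<sigma>, ltr \<sigma>)"
    using play_omega_now_ltr[of PG \<sigma>] by (simp add: FG_play_def)
next
  fix \<sigma> :: "'y list \<Rightarrow> 's" and k
  assume "\<sigma> \<in> eq_omega PG EG (k \<circ> (\<lambda>s. (shd s, stl s)))"
  then have "\<sigma> \<in> Phi_omega PG EG (eq_omega PG EG) (k \<circ> (\<lambda>s. (shd s, stl s)))"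
    by (subst (asm) eq_omega_unfold)
  then show "(now \<sigma>, ltr \<sigma>) \<in> FG_eq EG (play_omega PG) (eq_omega PG EG) k"
    by (simp add: Phi_omega_def FG_eq_def)
qed

end
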